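(* Let $\mathcal{A}$ be a znz-pattern with $m\ge2$ nonzero diagonal entries such that $D(\mathcal{A})$ has no $k$-cycles with $2\le k\le m$. Then $\mathcal{A}$ is not potentially nilpotent over any field $\mathbb{F}$.
   Context: A znz-pattern is an $n\times n$ matrix with entries in $\{*,0\}$; a realization over $\mathbb{F}$ is a matrix in $M_n(\mathbb{F})$ whose nonzero entries are exactly at the $*$ positions; $\mathcal{A}$ is potentially nilpotent over $\mathbb{F}$ if some realization is nilpotent. The digraph $D(\mathcal{A})$ has vertex set $\{1,\ldots,n\}$ and an arc $(i,j)$ whenever $\mathcal{A}_{i,j}=*$. A $k$-cycle is a sequence of $k$ distinct vertices $i_1,\ldots,i_k$ with arcs $(i_1,i_2),\ldots,(i_{k-1},i_k),(i_k,i_1)$. *)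

theory Defs
  imports "Jordan_Normal_Form.Matrix"
begin

text \<open>A znz-pattern of size n is represented by a predicate P on index pairs:
  P i j holds iff entry (i,j) is a star (nonzero); indices range over 0..<n.\<close>

definition realization :: "nat \<Rightarrow> (nat \<Rightarrow> nat \<Rightarrow> bool) \<Rightarrow> 'a::field mat \<Rightarrow> bool" where
  "realization n P A \<longleftrightarrow> A \<in> carrier_mat n n \<and>
     (\<forall>i<n. \<forall>j<n. (A $$ (i, j) \<noteq> 0 \<longleftrightarrow> P i j))"

definition nilpotent_mat :: "nat \<Rightarrow> 'a::field mat \<Rightarrow> bool" where
  "nilpotent_mat n A \<longleftrightarrow> A \<in> carrier_mat n n \<and> (\<exists>k. A ^\<^sub>m k = 0\<^sub>m n n)"

definition potentially_nilpotent :: "'a::field itself \<Rightarrow> nat \<Rightarrow> (nat \<Rightarrow> nat \<Rightarrow> bool) \<Rightarrow> bool" where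
  "potentially_nilpotent _ n P \<longleftrightarrow> (\<exists>A::'a mat. realization n P A \<and> nilpotent_mat n A)"

definition has_k_cycle :: "nat \<Rightarrow> (nat \<Rightarrow> nat \<Rightarrow> bool) \<Rightarrow> nat \<Rightarrow> bool" where
  "has_k_cycle n P k \<longleftrightarrow> (\<exists>vs. length vs = k \<and> k \<ge> 1 \<and> distinct vs \<and> set vs \<subseteq> {..<n} \<and>
      (\<forall>i<k. P (vs ! i) (vs ! ((i + 1) mod k))))"

definition num_nonzero_diag :: "nat \<Rightarrow> (nat \<Rightarrow> nat \<Rightarrow> bool) \<Rightarrow> nat" where
  "num_nonzero_diag n P = card {i. i < n \<and> P i i}"

end

theory Submission
  imports Defs "Jordan_Normal_Form.Char_Poly" "HOL-Combinatorics.Orbits"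
begin

(*
  We show that the
  coefficient of X^(n-m) in the characteristic polynomial det (X I - A) is the
  product of the negated nonzero diagonal entries of A, hence nonzero.  In the
  Leibniz expansion of the determinant, the identity permutation contributes
  X^(n-m) times this product plus higher powers.  Any other permutation p with a
  nonzero term moves its points along arcs of D(P), so the cycle of p through a
  moved point is a cycle of D(P) of length \<ge> 2, hence of length > m; so p
  moves more than m points and its term has degree < n - m.
  On the other hand, the characteristic polynomial of a nilpotent n \<times> n matrix
  is X^n, whose coefficient at X^(n-m) vanishes for 1 \<le> m \<le> n.
*)

text \<open>Embedding scalars as constant polynomials is a ring homomorphism; it lets
  us transport the identity A^k = 0 to the constant-polynomial copy of A.\<close>
lemma const_poly_hom: "comm_ring_hom (\<lambda>a::'a::comm_ring_1. [:a:])"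
  by unfold_locales (auto simp: one_pCons)

text \<open>The matrices Q_j = sum of X^(j-1-i) M^i over i < j, which satisfy
  Q_j (X I - M) = X^j I - M^j (the matrix version of the geometric sum).\<close>
fun geometric_quotient :: "nat \<Rightarrow> 'a::comm_ring_1 poly mat \<Rightarrow> nat \<Rightarrow> 'a poly mat" where
  "geometric_quotient n M 0 = 0\<^sub>m n n"
| "geometric_quotient n M (Suc j) = [:0,1:] \<cdot>\<^sub>m geometric_quotient n M j + M ^\<^sub>m j"

lemma geometric_quotient_carrier:
  assumes "M \<in> carrier_mat n n"
  shows "geometric_quotient n M j \<in> carrier_mat n n"
  using assms by (induction j) auto

lemma geometric_quotient_mult:
  fixes M :: "'a::comm_ring_1 poly mat"
  assumes M: "M \<in> carrier_mat n n"
  shows "geometric_quotient n M j * ([:0,1:] \<cdot>\<^sub>m 1\<^sub>m n - M) = [:0,1:] ^ j \<cdot>\<^sub>m 1\<^sub>m n - M ^\<^sub>m j"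
proof (induction j)
  case 0
  show ?case using M by (intro eq_matI) auto
next
  case (Suc j)
  define X :: "'a poly mat" where "X = [:0,1:] \<cdot>\<^sub>m 1\<^sub>m n"
  define Q where "Q = geometric_quotient n M j"
  have X: "X \<in> carrier_mat n n" and Q: "Q \<in> carrier_mat n n"
    and Mj: "M ^\<^sub>m j \<in> carrier_mat n n" and XM: "X - M \<in> carrier_mat n n"
    using M geometric_quotient_carrier[OF M] by (auto simp: X_def Q_def)
  have "([:0,1:] \<cdot>\<^sub>m Q + M ^\<^sub>m j) * (X - M) = [:0,1:] \<cdot>\<^sub>m (Q * (X - M)) + (M ^\<^sub>m j * X - M ^\<^sub>m j * M)"
    using Q Mj X M XM
    by (simp add: add_mult_distrib_mat[of _ n n] mult_smult_assoc_mat mult_minus_distrib_mat[OF Mj X M])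
  also have "M ^\<^sub>m j * X = [:0,1:] \<cdot>\<^sub>m M ^\<^sub>m j"
    unfolding X_def using Mj by (subst mult_smult_distrib[of _ n n _ n]) auto
  also have "M ^\<^sub>m j * M = M ^\<^sub>m Suc j" by simp
  finally show ?case
    using Suc.IH Mj M unfolding X_def Q_def
    by (intro eq_matI) (auto simp: right_diff_distrib)
qed

lemma char_poly_matrix_eq:
  assumes "A \<in> carrier_mat n n"
  shows "char_poly_matrix A = [:0,1:] \<cdot>\<^sub>m 1\<^sub>m n - map_mat (\<lambda>a. [:a:]) A"
  unfolding char_poly_matrix_def using assms by (intro eq_matI) auto

text \<open>If A^k = 0, then char_poly A is a factor of X^(k n): take determinants in
  Q_k (X I - A) = X^k I.\<close>
lemma char_poly_factor_of_monom:
  fixes A :: "'a::field mat"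
  assumes A: "A \<in> carrier_mat n n" and nil: "A ^\<^sub>m k = 0\<^sub>m n n"
  shows "char_poly A * det (geometric_quotient n (map_mat (\<lambda>a. [:a:]) A) k) = monom 1 (k * n)"
proof -
  interpret const: comm_ring_hom "\<lambda>a::'a. [:a:]" by (rule const_poly_hom)
  define M where "M = map_mat (\<lambda>a. [:a:]) A"
  define Q where "Q = geometric_quotient n M k"
  have M: "M \<in> carrier_mat n n" using A by (simp add: M_def)
  have Q: "Q \<in> carrier_mat n n" unfolding Q_def by (rule geometric_quotient_carrier[OF M])
  have XM: "[:0,1:] \<cdot>\<^sub>m 1\<^sub>m n - M \<in> carrier_mat n n" using M by (simp add: minus_carrier_mat)
  have "M ^\<^sub>m k = 0\<^sub>m n n"
    unfolding M_def using const.mat_hom_pow[OF A, of k, symmetric] nil by (auto intro!: eq_matI)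
  then have "Q * ([:0,1:] \<cdot>\<^sub>m 1\<^sub>m n - M) = [:0,1:] ^ k \<cdot>\<^sub>m 1\<^sub>m n"
    unfolding Q_def using geometric_quotient_mult[OF M, of k] by (auto intro!: eq_matI)
  then have "det Q * char_poly A = det ([:0,1:] ^ k \<cdot>\<^sub>m (1\<^sub>m n :: 'a poly mat))"
    using det_mult[OF Q XM] char_poly_matrix_eq[OF A]
    by (simp add: char_poly_def M_def)
  also have "\<dots> = monom 1 (k * n)" by (simp add: monom_altdef power_mult)
  finally show ?thesis by (simp add: Q_def M_def mult.commute)
qed

text \<open>A monic factor of a monomial X^N is itself a power of X: the orders at 0
  of the two factors add up to N, which is also the sum of their degrees.\<close>
lemma monic_factor_of_monom:
  fixes p q :: "'a::idom poly"
  assumes pq: "p * q = monom 1 N" and monic: "lead_coeff p = 1"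
  shows "p = monom 1 (degree p)"
proof -
  have nz: "p * q \<noteq> 0" using pq by (simp add: monom_eq_0_iff)
  then have p0: "p \<noteq> 0" and q0: "q \<noteq> 0" by auto
  have "order 0 (p * q) = N"
    unfolding pq monom_altdef using order_power_n_n[of 0 N] by simp
  then have "order 0 p + order 0 q = N" using order_mult[OF nz, of 0] by simp
  moreover have "degree p + degree q = N"
    using degree_mult_eq[OF p0 q0] pq by (simp add: degree_monom_eq)
  moreover have "order 0 q \<le> degree q" by (rule order_degree[OF q0])
  moreover have "order 0 p \<le> degree p" by (rule order_degree[OF p0])
  ultimately have "degree p \<le> order 0 p" by linarith
  then have low: "\<forall>i < degree p. coeff p i = 0"
    using monom_1_dvd_iff[OF p0] monom_1_dvd_iff' by blast
  show ?thesis
  proof (rule poly_eqI)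
    fix i
    show "coeff p i = coeff (monom 1 (degree p)) i"
      using low monic coeff_eq_0[of p i] by (cases "i < degree p"; cases "i = degree p") auto
  qed
qed

text \<open>A nilpotent n \<times> n matrix has characteristic polynomial X^n, since
  char_poly A is monic of degree n.\<close>
lemma char_poly_nilpotent:
  fixes A :: "'a::field mat"
  assumes A: "A \<in> carrier_mat n n" and nil: "A ^\<^sub>m k = 0\<^sub>m n n"
  shows "char_poly A = monom 1 n"
  using monic_factor_of_monom[OF char_poly_factor_of_monom[OF A nil]]
    degree_monic_char_poly[OF A] by simp

lemma cycle_from_perm:
  assumes p: "p permutes {0..<n}" and i: "p i \<noteq> i"
    and arcs: "\<And>x. p x \<noteq> x \<Longrightarrow> P x (p x)"
  shows "\<exists>L. 2 \<le> L \<and> L \<le> card {x. p x \<noteq> x} \<and> has_k_cycle n P L"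
proof -
  define T where "T = {x. p x \<noteq> x}"
  define L where "L = funpow_dist1 p i i"
  define vs where "vs = map (\<lambda>j. (p ^^ j) i) [0..<L]"
  have T: "T \<subseteq> {0..<n}" using p by (auto simp: T_def dest: permutes_not_in)
  have pT: "p permutes T" using p unfolding T_def permutes_def by simp
  have "permutation p" using p by (auto simp: permutation_permutes)
  then have orb: "i \<in> orbit p i" by (rule permutation_self_in_orbit)
  have returns: "(p ^^ L) i = i" unfolding L_def by (rule funpow_dist1_prop[OF orb])
  have "inj_on (\<lambda>j. (p ^^ j) i) {0..<L}" unfolding L_def by (rule inj_on_funpow_dist1[OF orb])
  then have dist: "distinct vs" unfolding vs_def distinct_map by simp
  have vsT: "set vs \<subseteq> T"
    using permutes_orbit_subset[OF pT] funpow_in_orbit[OF orb] i unfolding vs_def T_def by auto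
  have len: "length vs = L" by (simp add: vs_def)
  have L_card: "L \<le> card T"
    using card_mono[OF finite_subset[OF T finite_atLeastLessThan] vsT] distinct_card[OF dist] len
    by simp
  have "L \<noteq> 1" using returns i by auto
  then have L2: "2 \<le> L" unfolding L_def by simp
  have "has_k_cycle n P L"
    unfolding has_k_cycle_def
  proof (intro exI[of _ vs] conjI allI impI)
    show "length vs = L" "1 \<le> L" "distinct vs" "set vs \<subseteq> {..<n}"
      using len L2 dist vsT T by auto
    fix j assume j: "j < L"
    have "(p ^^ j) i \<in> T" using vsT j unfolding vs_def by auto
    then have arc: "P ((p ^^ j) i) ((p ^^ Suc j) i)" using arcs unfolding T_def by auto
    have "vs ! ((j + 1) mod L) = (p ^^ Suc j) i"
    proof (cases "Suc j < L")
      case False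
      then have "Suc j = L" using j by simp
      then show ?thesis using returns L2 by (simp add: vs_def)
    qed (simp add: vs_def)
    then show "P (vs ! j) (vs ! ((j + 1) mod L))" using arc j by (simp add: vs_def)
  qed
  then show ?thesis using L2 L_card unfolding T_def by blast
qed

lemma char_poly_matrix_entry:
  assumes "A \<in> carrier_mat n n" and "i < n" and "j < n"
  shows "char_poly_matrix A $$ (i, j) = (if i = j then [:0,1:] else 0) + [:- A $$ (i, j):]"
  using assms unfolding char_poly_matrix_def by auto

text \<open>At most n diagonal positions are starred, so for m \<ge> 1 the exponent n - m is below n.\<close>
lemma num_nonzero_diag_le: "num_nonzero_diag n P \<le> n"
  unfolding num_nonzero_diag_def using card_mono[of "{..<n}" "{i. i < n \<and> P i i}"] by auto

text \<open>In the Leibniz term of p only the fixed points of p contribute a factor of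
  degree 1; the others are constants.\<close>
lemma degree_leibniz_product:
  assumes A: "A \<in> carrier_mat n n" and p: "p permutes {0..<n}"
  shows "degree (\<Prod>i = 0..<n. char_poly_matrix A $$ (i, p i)) \<le> n - card {x. p x \<noteq> x}"
proof -
  define T where "T = {x. p x \<noteq> x}"
  have T: "T \<subseteq> {0..<n}" using p by (auto simp: T_def dest: permutes_not_in)
  have "degree (\<Prod>i = 0..<n. char_poly_matrix A $$ (i, p i))
        \<le> (\<Sum>i = 0..<n. degree (char_poly_matrix A $$ (i, p i)))"
    using degree_prod_sum_le[of "{0..<n}" "\<lambda>i. char_poly_matrix A $$ (i, p i)"] by (simp add: o_def)
  also have "\<dots> \<le> (\<Sum>i = 0..<n. if i \<in> T then 0 else 1)"
  proof (rule sum_mono)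
    fix x assume "x \<in> {0..<n}"
    then have "x < n" "p x < n" using p by (auto simp: permutes_in_image)
    then show "degree (char_poly_matrix A $$ (x, p x)) \<le> (if x \<in> T then 0 else 1)"
      using char_poly_matrix_entry[OF A] by (auto simp: T_def)
  qed
  also have "\<dots> = card ({0..<n} - T)"
    unfolding sum.If_cases[OF finite_atLeastLessThan] by (simp add: Diff_eq)
  also have "\<dots> = n - card T" using T by (simp add: card_Diff_subset finite_subset)
  finally show ?thesis unfolding T_def .
qed

lemma leibniz_product_arcs:
  assumes R: "realization n P A" and p: "p permutes {0..<n}"
    and nz: "(\<Prod>i = 0..<n. char_poly_matrix A $$ (i, p i)) \<noteq> 0" and x: "p x \<noteq> x"
  shows "P x (p x)"
proof -
  have A: "A \<in> carrier_mat n n" using R by (simp add: realization_def)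
  have xn: "x < n" using p x permutes_not_in[of p "{0..<n}" x] by auto
  then have pxn: "p x < n" using p by (simp add: permutes_in_image)
  have "char_poly_matrix A $$ (x, p x) \<noteq> 0" using nz xn by auto
  then have "A $$ (x, p x) \<noteq> 0" using char_poly_matrix_entry[OF A xn pxn] x by auto
  then show ?thesis using R xn pxn by (simp add: realization_def)
qed

text \<open>The diagonal Leibniz term is X^(n-m) times the product of X - a_ii over
  the starred diagonal positions, so its coefficient at X^(n-m) is the product of
  the negated (nonzero) starred diagonal entries.\<close>
lemma diagonal_product_coeff:
  assumes R: "realization n P A"
  shows "coeff (\<Prod>i = 0..<n. char_poly_matrix A $$ (i, i)) (n - num_nonzero_diag n P) \<noteq> 0"
proof -
  define S where "S = {i. i < n \<and> P i i}"
  have A: "A \<in> carrier_mat n n" and RP: "\<And>i j. i < n \<Longrightarrow> j < n \<Longrightarrow> A $$ (i, j) \<noteq> 0 \<longleftrightarrow> P i j"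
    using R by (auto simp: realization_def)
  have S: "S \<subseteq> {0..<n}" and finS: "finite S" by (auto simp: S_def)
  have diag: "char_poly_matrix A $$ (i, i) = (if i \<in> S then [:- A $$ (i, i), 1:] else monom 1 1)"
    if "i < n" for i
    using char_poly_matrix_entry[OF A that that] RP[OF that that] that
    by (auto simp: S_def monom_altdef)
  have "(\<Prod>i = 0..<n. char_poly_matrix A $$ (i, i))
        = (\<Prod>i\<in>{0..<n} - S. char_poly_matrix A $$ (i, i)) * (\<Prod>i\<in>S. char_poly_matrix A $$ (i, i))"
    by (rule prod.subset_diff[OF S]) simp
  also have "(\<Prod>i\<in>{0..<n} - S. char_poly_matrix A $$ (i, i)) = monom 1 (n - card S)"
    using S diag by (simp add: card_Diff_subset finS monom_altdef power_mult)
  also have "(\<Prod>i\<in>S. char_poly_matrix A $$ (i, i)) = (\<Prod>i\<in>S. [:- A $$ (i, i), 1:])"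
    using S diag by (intro prod.cong) auto
  finally have "coeff (\<Prod>i = 0..<n. char_poly_matrix A $$ (i, i)) (n - card S)
                = coeff (\<Prod>i\<in>S. [:- A $$ (i, i), 1:]) 0"
    by (simp add: coeff_monom_mult)
  also have "\<dots> = (\<Prod>i\<in>S. - A $$ (i, i))"
    by (simp add: poly_0_coeff_0[symmetric] poly_prod)
  also have "\<dots> \<noteq> 0" using finS RP by (auto simp: S_def)
  finally show ?thesis unfolding num_nonzero_diag_def S_def .
qed

text \<open>Main lemma: under the cycle condition, only the identity permutation
  contributes to the coefficient of X^(n-m), which is therefore nonzero.\<close>
lemma char_poly_coeff_nonzero:
  fixes A :: "'a::field mat"
  assumes R: "realization n P A" and m: "num_nonzero_diag n P = m"
    and no_cycles: "\<And>k. 2 \<le> k \<Longrightarrow> k \<le> m \<Longrightarrow> \<not> has_k_cycle n P k"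
  shows "coeff (char_poly A) (n - m) \<noteq> 0"
proof -
  have A: "A \<in> carrier_mat n n" using R by (simp add: realization_def)
  define leibniz :: "(nat \<Rightarrow> nat) \<Rightarrow> 'a poly" where
    "leibniz p = signof p * (\<Prod>i = 0..<n. char_poly_matrix A $$ (i, p i))" for p
  have other: "coeff (leibniz p) (n - m) = 0" if p: "p permutes {0..<n}" and "p \<noteq> id" for p
  proof (cases "(\<Prod>i = 0..<n. char_poly_matrix A $$ (i, p i)) = 0")
    case True
    then show ?thesis by (simp only: leibniz_def mult_zero_right coeff_0)
  next
    case False
    obtain i where i: "p i \<noteq> i" using \<open>p \<noteq> id\<close> by (metis eq_id_iff)
    obtain L where L: "2 \<le> L" "L \<le> card {x. p x \<noteq> x}" "has_k_cycle n P L"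
      using cycle_from_perm[of p n i P, OF p i leibniz_product_arcs[OF R p False]] by blast
    have "m < L" using no_cycles L by (meson not_le_imp_less)
    moreover have "card {x. p x \<noteq> x} \<le> n"
      using p card_mono[of "{0..<n}" "{x. p x \<noteq> x}"] by (auto dest: permutes_not_in)
    ultimately have "degree (leibniz p) < n - m"
      using degree_leibniz_product[OF A p] L(2) by (simp add: leibniz_def degree_signof_mult)
    then show ?thesis by (rule coeff_eq_0)
  qed
  have "coeff (char_poly A) (n - m) = (\<Sum>p | p permutes {0..<n}. coeff (leibniz p) (n - m))"
    unfolding char_poly_def leibniz_def det_def'[OF char_poly_matrix_closed[OF A]] by (rule coeff_sum)
  also have "\<dots> = coeff (leibniz id) (n - m)
      + (\<Sum>p \<in> {p. p permutes {0..<n}} - {id}. coeff (leibniz p) (n - m))"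
    by (rule sum.remove) (auto simp: permutes_id finite_permutations)
  also have "\<dots> = coeff (leibniz id) (n - m)"
    using other by (simp add: sum.neutral)
  also have "\<dots> \<noteq> 0"
    using diagonal_product_coeff[OF R] m by (simp add: leibniz_def id_def)
  finally show ?thesis .
qed

theorem corollary4p5:
  fixes n m :: nat and P :: "nat \<Rightarrow> nat \<Rightarrow> bool"
  assumes "num_nonzero_diag n P = m"
    and "m \<ge> 2"
    and "\<forall>k. 2 \<le> k \<and> k \<le> m \<longrightarrow> \<not> has_k_cycle n P k"
  shows "\<not> potentially_nilpotent TYPE('a::field) n P"
proof
  assume "potentially_nilpotent TYPE('a::field) n P"
  then obtain A :: "'a mat" and k where R: "realization n P A" and nil: "A ^\<^sub>m k = 0\<^sub>m n n"
    unfolding potentially_nilpotent_def nilpotent_mat_def by blast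
  have A: "A \<in> carrier_mat n n" using R by (simp add: realization_def)
  have "coeff (char_poly A) (n - m) \<noteq> 0"
    using char_poly_coeff_nonzero[OF R assms(1)] assms(3) by blast
  moreover have "n - m \<noteq> n" using num_nonzero_diag_le[of n P] assms(1,2) by linarith
  ultimately show False using char_poly_nilpotent[OF A nil] by (simp add: coeff_monom)
qed

end
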